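(* Let $G$ be a connected graph, let $L$ be a list-assignment with $|L(u)|\ge\deg(u)+1$ for all $u\in V(G)$, and let $\alpha$ be an $L$-colouring. Fix $v,w\in V(G)$, let $d:=\mathrm{dist}(v,w)$, and let $P$ be a shortest $v,w$-path. If $v$ is unfrozen under $\alpha$, then there exists a recolouring sequence $\mathcal{S}$ from $\alpha$ to some $L$-colouring $\gamma$ such that (i) $w$ is unfrozen under $\gamma$, (ii) every vertex recoloured during $\mathcal{S}$ belongs to $V(P)\setminus\{w\}$, and (iii) $|\mathcal{S}|\le d$. Moreover, if $|L(v)|\ge\deg(v)+2$, then $v$ is also unfrozen under $\gamma$.
   Context: An $L$-colouring is a proper colouring $\varphi$ with $\varphi(v)\in L(v)$ for all $v$. A recolouring sequence is a sequence of single-vertex recolouring steps, each changing the colour of one vertex to another colour of its list so that the colouring remains proper; $|\mathcal{S}|$ is its number of steps. A vertex $u$ is frozen under $\varphi$ if every colour of $L(u)\setminus\{\varphi(u)\}$ appears on a neighbour of $u$, and unfrozen otherwise. *)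

theory Defs
  imports Main
begin

definition simple_graph :: "'v set \<Rightarrow> ('v \<Rightarrow> 'v \<Rightarrow> bool) \<Rightarrow> bool" where
  "simple_graph V E \<longleftrightarrow> finite V \<and> (\<forall>x y. E x y \<longrightarrow> x \<in> V \<and> y \<in> V)
     \<and> (\<forall>x y. E x y \<longrightarrow> E y x) \<and> (\<forall>x. \<not> E x x)"

definition nbrs :: "'v set \<Rightarrow> ('v \<Rightarrow> 'v \<Rightarrow> bool) \<Rightarrow> 'v \<Rightarrow> 'v set" where
  "nbrs V E u = {x \<in> V. E u x}"

definition deg :: "'v set \<Rightarrow> ('v \<Rightarrow> 'v \<Rightarrow> bool) \<Rightarrow> 'v \<Rightarrow> nat" where
  "deg V E u = card (nbrs V E u)"

definition is_walk :: "'v set \<Rightarrow> ('v \<Rightarrow> 'v \<Rightarrow> bool) \<Rightarrow> 'v list \<Rightarrow> bool" where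
  "is_walk V E p \<longleftrightarrow> p \<noteq> [] \<and> set p \<subseteq> V \<and> (\<forall>i. Suc i < length p \<longrightarrow> E (p ! i) (p ! Suc i))"

definition walk_between :: "'v set \<Rightarrow> ('v \<Rightarrow> 'v \<Rightarrow> bool) \<Rightarrow> 'v \<Rightarrow> 'v \<Rightarrow> 'v list \<Rightarrow> bool" where
  "walk_between V E u w p \<longleftrightarrow> is_walk V E p \<and> hd p = u \<and> last p = w"

definition connected_graph :: "'v set \<Rightarrow> ('v \<Rightarrow> 'v \<Rightarrow> bool) \<Rightarrow> bool" where
  "connected_graph V E \<longleftrightarrow> V \<noteq> {} \<and> (\<forall>u\<in>V. \<forall>w\<in>V. \<exists>p. walk_between V E u w p)"

definition dist :: "'v set \<Rightarrow> ('v \<Rightarrow> 'v \<Rightarrow> bool) \<Rightarrow> 'v \<Rightarrow> 'v \<Rightarrow> nat" where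
  "dist V E u w = (LEAST n. \<exists>p. walk_between V E u w p \<and> length p = Suc n)"

text \<open>A shortest u,w-path: a walk from u to w with exactly dist(u,w) edges (hence a path).\<close>
definition shortest_path :: "'v set \<Rightarrow> ('v \<Rightarrow> 'v \<Rightarrow> bool) \<Rightarrow> 'v \<Rightarrow> 'v \<Rightarrow> 'v list \<Rightarrow> bool" where
  "shortest_path V E u w p \<longleftrightarrow> walk_between V E u w p \<and> length p = Suc (dist V E u w)"

definition L_colouring :: "'v set \<Rightarrow> ('v \<Rightarrow> 'v \<Rightarrow> bool) \<Rightarrow> ('v \<Rightarrow> 'c set) \<Rightarrow> ('v \<Rightarrow> 'c) \<Rightarrow> bool" where
  "L_colouring V E L \<phi> \<longleftrightarrow> (\<forall>u\<in>V. \<phi> u \<in> L u) \<and> (\<forall>x\<in>V. \<forall>y\<in>V. E x y \<longrightarrow> \<phi> x \<noteq> \<phi> y)"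

definition frozen :: "'v set \<Rightarrow> ('v \<Rightarrow> 'v \<Rightarrow> bool) \<Rightarrow> ('v \<Rightarrow> 'c set) \<Rightarrow> ('v \<Rightarrow> 'c) \<Rightarrow> 'v \<Rightarrow> bool" where
  "frozen V E L \<phi> u \<longleftrightarrow> (\<forall>c \<in> L u - {\<phi> u}. \<exists>x \<in> nbrs V E u. \<phi> x = c)"

definition unfrozen :: "'v set \<Rightarrow> ('v \<Rightarrow> 'v \<Rightarrow> bool) \<Rightarrow> ('v \<Rightarrow> 'c set) \<Rightarrow> ('v \<Rightarrow> 'c) \<Rightarrow> 'v \<Rightarrow> bool" where
  "unfrozen V E L \<phi> u \<longleftrightarrow> \<not> frozen V E L \<phi> u"

fun recol_seq :: "'v set \<Rightarrow> ('v \<Rightarrow> 'v \<Rightarrow> bool) \<Rightarrow> ('v \<Rightarrow> 'c set) \<Rightarrow> ('v \<Rightarrow> 'c) \<Rightarrow> ('v \<times> 'c) list \<Rightarrow> bool" where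
  "recol_seq V E L \<phi> [] = True"
| "recol_seq V E L \<phi> ((x, c) # S) \<longleftrightarrow>
     x \<in> V \<and> c \<in> L x \<and> c \<noteq> \<phi> x \<and> L_colouring V E L (\<phi>(x := c)) \<and> recol_seq V E L (\<phi>(x := c)) S"

fun apply_seq :: "('v \<Rightarrow> 'c) \<Rightarrow> ('v \<times> 'c) list \<Rightarrow> ('v \<Rightarrow> 'c)" where
  "apply_seq \<phi> [] = \<phi>"
| "apply_seq \<phi> ((x, c) # S) = apply_seq (\<phi>(x := c)) S"

end

theory Submission
  imports Defs
begin

text \<open>Walk along \<open>P\<close> from \<open>v\<close>, keeping the current vertex \<open>u\<close> unfrozen. If the next vertex \<open>q\<close>
  is frozen, then \<open>|L(q)| \<ge> deg(q) + 1\<close> forces the neighbours of \<open>q\<close> to carry pairwise distinct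
  colours, exactly those of \<open>L(q)\<close> other than the colour of \<open>q\<close>; recolouring \<open>u\<close> (possible since
  \<open>u\<close> is unfrozen) therefore frees the old colour of \<open>u\<close> at \<open>q\<close>. Each edge of \<open>P\<close> thus costs at
  most one recolouring, never of \<open>w\<close>. A vertex with \<open>|L(v)| \<ge> deg(v) + 2\<close> is never frozen.\<close>

lemma finite_nbrs: "simple_graph V E \<Longrightarrow> finite (nbrs V E u)"
  unfolding simple_graph_def nbrs_def by auto

lemma is_walk_Cons_Cons:
  "is_walk V E (u # q # p) \<longleftrightarrow> u \<in> V \<and> E u q \<and> is_walk V E (q # p)"
  unfolding is_walk_def by (auto simp: less_Suc_eq_0_disj)

lemma frozen_iff_subset_image:
  "frozen V E L \<phi> u \<longleftrightarrow> L u - {\<phi> u} \<subseteq> \<phi> ` nbrs V E u"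
  unfolding frozen_def by (force simp: image_iff)

lemma unfrozen_if_card_ge_deg_plus_2:
  assumes G: "simple_graph V E" and fin: "finite (L u)" and big: "card (L u) \<ge> deg V E u + 2"
  shows "unfrozen V E L \<phi> u"
  unfolding unfrozen_def
proof
  assume "frozen V E L \<phi> u"
  then have "card (L u - {\<phi> u}) \<le> card (\<phi> ` nbrs V E u)"
    using G by (simp add: frozen_iff_subset_image card_mono finite_nbrs)
  also have "\<dots> \<le> deg V E u"
    unfolding deg_def by (rule card_image_le[OF finite_nbrs[OF G]])
  finally show False
    using fin big by (simp add: card_Diff_singleton_if split: if_splits)
qed

lemma frozen_nbrs_colours_distinct:
  assumes G: "simple_graph V E" and fin: "finite (L q)" and big: "card (L q) \<ge> deg V E q + 1"
    and fr: "frozen V E L \<phi> q"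
  shows "L q - {\<phi> q} = \<phi> ` nbrs V E q" and "inj_on \<phi> (nbrs V E q)"
proof -
  let ?N = "nbrs V E q"
  have fN: "finite ?N" using G by (rule finite_nbrs)
  have sub: "L q - {\<phi> q} \<subseteq> \<phi> ` ?N" using fr by (simp add: frozen_iff_subset_image)
  have "card ?N \<le> card (L q - {\<phi> q})"
    using fin big unfolding deg_def by (auto simp: card_Diff_singleton_if)
  moreover have "card (L q - {\<phi> q}) \<le> card (\<phi> ` ?N)" using sub fN by (simp add: card_mono)
  moreover have "card (\<phi> ` ?N) \<le> card ?N" using fN by (rule card_image_le)
  ultimately have cards: "card (L q - {\<phi> q}) = card (\<phi> ` ?N)" "card (\<phi> ` ?N) = card ?N"
    by linarith+
  show "L q - {\<phi> q} = \<phi> ` ?N" using card_seteq[OF finite_imageI[OF fN] sub] cards(1) by simp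
  show "inj_on \<phi> ?N" using eq_card_imp_inj_on[OF fN cards(2)] .
qed

lemma unfrozen_fun_upd_nbr:
  assumes G: "simple_graph V E" and fin: "finite (L q)" and big: "card (L q) \<ge> deg V E q + 1"
    and fr: "frozen V E L \<phi> q" and uq: "E u q" and c: "c \<noteq> \<phi> u"
  shows "unfrozen V E L (\<phi>(u := c)) q"
proof -
  let ?N = "nbrs V E q"
  have u_nbr: "u \<in> ?N" and u_ne_q: "u \<noteq> q"
    using G uq unfolding simple_graph_def nbrs_def by blast+
  have freed: "\<phi> u \<in> L q - {\<phi> q}"
    using frozen_nbrs_colours_distinct(1)[OF G fin big fr] u_nbr by blast
  have "(\<phi>(u := c)) x \<noteq> \<phi> u" if "x \<in> ?N" for x
    using c inj_onD[OF frozen_nbrs_colours_distinct(2)[OF G fin big fr] _ that u_nbr] by auto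
  with freed u_ne_q show ?thesis unfolding unfrozen_def frozen_def by (metis fun_upd_other)
qed

lemma L_colouring_recolour_unfrozen:
  assumes G: "simple_graph V E" and col: "L_colouring V E L \<phi>" and unf: "unfrozen V E L \<phi> u"
  obtains c where "c \<in> L u" "c \<noteq> \<phi> u" "L_colouring V E L (\<phi>(u := c))"
proof -
  from unf obtain c where c: "c \<in> L u" "c \<noteq> \<phi> u" and free: "\<forall>x\<in>nbrs V E u. \<phi> x \<noteq> c"
    unfolding unfrozen_def frozen_def by blast
  have "L_colouring V E L (\<phi>(u := c))"
    using col c free G unfolding L_colouring_def simple_graph_def nbrs_def by auto
  with c that show ?thesis by blast
qed

lemma walk_recolouring_unfreezes_last:
  assumes G: "simple_graph V E" and LL: "\<forall>u\<in>V. finite (L u) \<and> card (L u) \<ge> deg V E u + 1"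
  shows "is_walk V E p \<Longrightarrow> L_colouring V E L \<phi> \<Longrightarrow> unfrozen V E L \<phi> (hd p) \<Longrightarrow>
    \<exists>S. recol_seq V E L \<phi> S \<and> unfrozen V E L (apply_seq \<phi> S) (last p)
      \<and> fst ` set S \<subseteq> set p - {last p} \<and> length S < length p"
proof (induction p arbitrary: \<phi>)
  case Nil
  then show ?case by (simp add: is_walk_def)
next
  case (Cons u p)
  show ?case
  proof (cases "p = [] \<or> u = last p")
    case True
    then show ?thesis using Cons.prems(3) by (intro exI[of _ "[]"]) auto
  next
    case False
    then obtain q p' where p: "p = q # p'" and u_ne_last: "u \<noteq> last p"
      by (cases p) auto
    have walk: "is_walk V E p" and u: "u \<in> V" and uq: "E u q"
      using Cons.prems(1) by (simp_all add: p is_walk_Cons_Cons)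
    have qV: "q \<in> V" using walk by (simp add: p is_walk_def)
    show ?thesis
    proof (cases "unfrozen V E L \<phi> q")
      case True
      then obtain S where "recol_seq V E L \<phi> S" "unfrozen V E L (apply_seq \<phi> S) (last p)"
        "fst ` set S \<subseteq> set p - {last p}" "length S < length p"
        using Cons.IH[OF walk Cons.prems(2)] by (auto simp: p)
      then show ?thesis using p by (intro exI[of _ S]) auto
    next
      case False
      obtain c where c: "c \<in> L u" "c \<noteq> \<phi> u" and col: "L_colouring V E L (\<phi>(u := c))"
        using L_colouring_recolour_unfrozen[OF G Cons.prems(2)] Cons.prems(3) by auto
      have "unfrozen V E L (\<phi>(u := c)) (hd p)"
        using unfrozen_fun_upd_nbr[of V E L q \<phi> u c] G LL qV False uq c(2) by (simp add: p unfrozen_def)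
      then obtain S where "recol_seq V E L (\<phi>(u := c)) S"
        "unfrozen V E L (apply_seq (\<phi>(u := c)) S) (last p)"
        "fst ` set S \<subseteq> set p - {last p}" "length S < length p"
        using Cons.IH[OF walk col] by blast
      then show ?thesis using c u col u_ne_last p by (intro exI[of _ "(u, c) # S"]) auto
    qed
  qed
qed

theorem mainTheorem5:
  fixes V :: "'v set" and E :: "'v \<Rightarrow> 'v \<Rightarrow> bool"
    and L :: "'v \<Rightarrow> 'c set" and \<alpha> :: "'v \<Rightarrow> 'c"
    and v w :: 'v and P :: "'v list"
  assumes "simple_graph V E" and "connected_graph V E"
    and "\<forall>u\<in>V. finite (L u) \<and> card (L u) \<ge> deg V E u + 1"
    and "L_colouring V E L \<alpha>"
    and "v \<in> V" and "w \<in> V"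
    and "shortest_path V E v w P"
    and "unfrozen V E L \<alpha> v"
  shows "\<exists>S. recol_seq V E L \<alpha> S
           \<and> unfrozen V E L (apply_seq \<alpha> S) w
           \<and> (\<forall>(x, c) \<in> set S. x \<in> set P - {w})
           \<and> length S \<le> dist V E v w
           \<and> (card (L v) \<ge> deg V E v + 2 \<longrightarrow> unfrozen V E L (apply_seq \<alpha> S) v)"
proof -
  have P: "is_walk V E P" "hd P = v" "last P = w" "length P = Suc (dist V E v w)"
    using assms(7) unfolding shortest_path_def walk_between_def by auto
  obtain S where S: "recol_seq V E L \<alpha> S" "unfrozen V E L (apply_seq \<alpha> S) w"
      "fst ` set S \<subseteq> set P - {w}" "length S \<le> dist V E v w"
    using walk_recolouring_unfreezes_last[OF assms(1,3) P(1) assms(4)] P assms(8) by auto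
  have "card (L v) \<ge> deg V E v + 2 \<longrightarrow> unfrozen V E L (apply_seq \<alpha> S) v"
    using unfrozen_if_card_ge_deg_plus_2[OF assms(1)] assms(3,5) by blast
  with S show ?thesis by fastforce
qed

end
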